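(* Let $(R,\mathfrak m)$ be a Noetherian local ring and $\mathfrak p,\mathfrak q$ prime ideals of $R$ with $\mathfrak p+\mathfrak q=\mathfrak m$, $\mathfrak p\cap\mathfrak q=\mathfrak p\mathfrak q$, and $R/\mathfrak q$ a discrete valuation ring. Then $\mathfrak p$ is principal. *)

theory Defs
  imports "HOL-Algebra.Algebra"
begin

definition local_ring :: "('a, 'b) ring_scheme \<Rightarrow> 'a set \<Rightarrow> bool" where
  "local_ring R m \<longleftrightarrow> cring R \<and> maximalideal m R \<and>
     (\<forall>I. maximalideal I R \<longrightarrow> I = m)"

definition DVR :: "('a, 'b) ring_scheme \<Rightarrow> bool" where
  "DVR S \<longleftrightarrow> principal_domain S \<and>
     (\<exists>!P. primeideal P S \<and> P \<noteq> {\<zero>\<^bsub>S\<^esub>})"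

end

theory Submission
  imports Defs
begin

text \<open>The image of \<open>p\<close> in the principal ideal domain \<open>R/q\<close> is generated by the class of
  some \<open>x \<in> p\<close>, so \<open>p \<subseteq> (x) + (p \<inter> q) = (x) + p q\<close>. As \<open>q \<subseteq> m\<close>, every \<open>1 - u\<close> with
  \<open>u \<in> q\<close> is a unit, and Nakayama's lemma for the finitely generated ideal \<open>p\<close> gives
  \<open>p = (x)\<close>.\<close>

lemma (in ring) ideal_le_maximalideal:
  assumes "ideal I R" "\<one> \<notin> I"
  shows "\<exists>M. maximalideal M R \<and> I \<subseteq> M"
proof -
  define S where "S = {J. ideal J R \<and> I \<subseteq> J \<and> \<one> \<notin> J}"
  have "\<exists>M\<in>S. \<forall>J\<in>S. M \<subseteq> J \<longrightarrow> J = M"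
  proof (rule subset_Zorn_nonempty)
    show "S \<noteq> {}" using assms unfolding S_def by blast
  next
    fix C assume C: "C \<noteq> {}" "subset.chain S C"
    then have "subset.chain {J. ideal J R} C"
      unfolding pred_on.chain_def S_def by blast
    then have "ideal (\<Union>C) R" using chain_Union_is_ideal[of C] C(1) by simp
    then show "\<Union>C \<in> S" using C unfolding pred_on.chain_def S_def by blast
  qed
  then obtain M where M: "M \<in> S" and max: "\<And>J. J \<in> S \<Longrightarrow> M \<subseteq> J \<Longrightarrow> J = M"
    by blast
  have "maximalideal M R"
  proof (rule maximalidealI)
    show "ideal M R" "carrier R \<noteq> M" using M unfolding S_def by auto
  next
    fix J assume "ideal J R" "M \<subseteq> J" "J \<subseteq> carrier R"
    then show "J = M \<or> J = carrier R"
      using max[of J] M ideal.one_imp_carrier unfolding S_def by blast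
  qed
  then show ?thesis using M unfolding S_def by blast
qed

lemma local_ring_nonunit_mem:
  fixes R (structure)
  assumes "local_ring R m" "a \<in> carrier R" "a \<notin> Units R"
  shows "a \<in> m"
proof -
  interpret cring R using assms(1) local_ring_def by blast
  have "\<one> \<notin> PIdl a"
    using assms(2,3) ideal_eq_carrier_iff ideal.one_imp_carrier[OF cgenideal_ideal] by metis
  then obtain M where "maximalideal M R" "PIdl a \<subseteq> M"
    using ideal_le_maximalideal cgenideal_ideal assms(2) by blast
  then show ?thesis
    using assms(1) cgenideal_self[OF assms(2)] unfolding local_ring_def by blast
qed

lemma local_ring_one_minus_Units:
  fixes R (structure)
  assumes "local_ring R m" "u \<in> m"
  shows "\<one> \<ominus> u \<in> Units R"
proof (rule ccontr)
  interpret cring R using assms(1) local_ring_def by blast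
  have m: "ideal m R" "\<one> \<notin> m"
    using assms(1) maximalideal.axioms(1) maximalideal.I_notcarr ideal.one_imp_carrier
    unfolding local_ring_def by metis+
  have u: "u \<in> carrier R" using ideal.Icarr[OF m(1) assms(2)] .
  assume "\<one> \<ominus> u \<notin> Units R"
  then have "\<one> \<ominus> u \<in> m" using local_ring_nonunit_mem[OF assms(1)] u by simp
  then have "(\<one> \<ominus> u) \<oplus> u \<in> m"
    using assms(2) m(1) by (simp add: additive_subgroup.a_closed ideal.axioms(1))
  moreover have "(\<one> \<ominus> u) \<oplus> u = \<one>" using u by algebra
  ultimately show False using m(2) by simp
qed

lemma (in ring) set_add_ideal_upper:
  assumes "ideal I R" "ideal J R"
  shows "I \<subseteq> I <+>\<^bsub>R\<^esub> J" "J \<subseteq> I <+>\<^bsub>R\<^esub> J"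
proof -
  have "I \<union> J \<subseteq> carrier R" using ideal.Icarr[OF assms(1)] ideal.Icarr[OF assms(2)] by blast
  then have "I \<union> J \<subseteq> I <+>\<^bsub>R\<^esub> J" using union_genideal[OF assms] by (metis genideal_self)
  then show "I \<subseteq> I <+>\<^bsub>R\<^esub> J" "J \<subseteq> I <+>\<^bsub>R\<^esub> J" by simp_all
qed

lemma (in cring) ideal_prod_add_cgenideal_subset:
  assumes N: "ideal N R" and J: "ideal J R" and b: "b \<in> carrier R"
  shows "(N <+>\<^bsub>R\<^esub> PIdl b) \<cdot> J \<subseteq> N <+>\<^bsub>R\<^esub> (J #> b)"
proof
  fix s assume "s \<in> (N <+>\<^bsub>R\<^esub> PIdl b) \<cdot> J"
  then show "s \<in> N <+>\<^bsub>R\<^esub> (J #> b)"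
  proof (induct s rule: ideal_prod.induct)
    case (prod i j)
    then obtain n t where nt: "n \<in> N" "t \<in> carrier R" "i = n \<oplus> t \<otimes> b"
      unfolding set_add_def' cgenideal_def by blast
    have j: "j \<in> carrier R" using ideal.Icarr[OF J prod(2)] .
    have "i \<otimes> j = n \<otimes> j \<oplus> (t \<otimes> j) \<otimes> b"
      using nt ideal.Icarr[OF N nt(1)] j b by (simp add: l_distr r_distr m_ac)
    moreover have "n \<otimes> j \<in> N" using ideal.I_r_closed[OF N nt(1) j] .
    moreover have "t \<otimes> j \<in> J" using ideal.I_l_closed[OF J prod(2) nt(2)] .
    ultimately show ?case unfolding set_add_def' r_coset_def by blast
  next
    case (sum s1 s2)
    then obtain n1 u1 n2 u2 where
      s: "n1 \<in> N" "u1 \<in> J" "s1 = n1 \<oplus> u1 \<otimes> b" "n2 \<in> N" "u2 \<in> J" "s2 = n2 \<oplus> u2 \<otimes> b"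
      unfolding set_add_def' r_coset_def by blast
    have "s1 \<oplus> s2 = (n1 \<oplus> n2) \<oplus> (u1 \<oplus> u2) \<otimes> b"
      using s b ideal.Icarr[OF N] ideal.Icarr[OF J] by (simp add: l_distr a_ac)
    moreover have "n1 \<oplus> n2 \<in> N" "u1 \<oplus> u2 \<in> J"
      using s N J by (simp_all add: additive_subgroup.a_closed ideal.axioms(1))
    ultimately show ?case unfolding set_add_def' r_coset_def by blast
  qed
qed

lemma (in cring) nakayama_step:
  assumes J: "ideal J R" "\<And>u. u \<in> J \<Longrightarrow> \<one> \<ominus> u \<in> Units R"
    and N: "ideal N R" and b: "b \<in> carrier R"
    and b_mem: "b \<in> N <+>\<^bsub>R\<^esub> (N <+>\<^bsub>R\<^esub> PIdl b) \<cdot> J"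
  shows "b \<in> N"
proof -
  obtain n0 s where n0: "n0 \<in> N" and s: "s \<in> (N <+>\<^bsub>R\<^esub> PIdl b) \<cdot> J" and "b = n0 \<oplus> s"
    using b_mem unfolding set_add_def' by blast
  from s have "s \<in> N <+>\<^bsub>R\<^esub> (J #> b)"
    using ideal_prod_add_cgenideal_subset[OF N J(1) b] by blast
  then obtain n1 u where "n1 \<in> N" "u \<in> J" "s = n1 \<oplus> u \<otimes> b"
    unfolding set_add_def' r_coset_def by blast
  with n0 \<open>b = n0 \<oplus> s\<close> have nu: "n0 \<in> N" "n1 \<in> N" "u \<in> J" "b = n0 \<oplus> (n1 \<oplus> u \<otimes> b)"
    by simp_all
  have c: "n0 \<in> carrier R" "n1 \<in> carrier R" "u \<in> carrier R"
    using nu ideal.Icarr[OF N] ideal.Icarr[OF J(1)] by auto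
  have "(\<one> \<ominus> u) \<otimes> b = b \<ominus> u \<otimes> b"
    using c b by (simp add: minus_eq l_distr l_minus)
  also have "\<dots> = n0 \<oplus> n1"
    using c b by (subst (1) nu(4)) (simp add: minus_eq a_assoc r_neg)
  finally have "(\<one> \<ominus> u) \<otimes> b = n0 \<oplus> n1" .
  then have "(\<one> \<ominus> u) \<otimes> b \<in> N"
    using nu N by (simp add: additive_subgroup.a_closed ideal.axioms(1))
  then have "inv (\<one> \<ominus> u) \<otimes> ((\<one> \<ominus> u) \<otimes> b) \<in> N"
    using ideal.I_l_closed[OF N] J(2)[OF nu(3)] by blast
  moreover have "inv (\<one> \<ominus> u) \<otimes> ((\<one> \<ominus> u) \<otimes> b) = b"
    using J(2)[OF nu(3)] b c(3) by (simp add: m_assoc[symmetric])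
  ultimately show ?thesis by simp
qed

lemma (in cring) nakayama_modulo:
  assumes J: "ideal J R" "\<And>u. u \<in> J \<Longrightarrow> \<one> \<ominus> u \<in> Units R"
    and I: "ideal I R" and A: "finite A"
  shows "\<lbrakk>ideal N R; N \<subseteq> I; A \<subseteq> I; I = Idl (N \<union> A); I \<subseteq> N <+>\<^bsub>R\<^esub> I \<cdot> J\<rbrakk> \<Longrightarrow> N = I"
  using A
proof (induct A arbitrary: N rule: finite_induct)
  case empty
  then show ?case using genideal_minimal[of N N] by auto
next
  case (insert b A)
  have b: "b \<in> carrier R" using insert(6) ideal.Icarr[OF I] by blast
  have N: "ideal N R" "N \<subseteq> I" using insert(4,5) by blast+
  define N' where "N' = N <+>\<^bsub>R\<^esub> PIdl b"
  have N'_Idl: "N' = Idl (N \<union> PIdl b)"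
    unfolding N'_def using union_genideal[OF N(1) cgenideal_ideal[OF b]] by simp
  have N'_ge: "N \<subseteq> N'" "b \<in> N'"
    using set_add_ideal_upper[OF N(1) cgenideal_ideal[OF b]] cgenideal_self[OF b]
    unfolding N'_def by blast+
  have "PIdl b \<subseteq> I" using cgenideal_minimal[OF I] insert(6) by simp
  then have "N' \<subseteq> I" unfolding N'_Idl using genideal_minimal[OF I] N(2) by simp
  have N'_carr: "N' \<union> A \<subseteq> carrier R"
    using \<open>N' \<subseteq> I\<close> insert(6) ideal.Icarr[OF I] by blast
  have "I = Idl (N' \<union> A)"
  proof
    show "Idl (N' \<union> A) \<subseteq> I"
      using genideal_minimal[OF I] \<open>N' \<subseteq> I\<close> insert(6) by blast
    have "N \<union> insert b A \<subseteq> Idl (N' \<union> A)"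
      using genideal_self[OF N'_carr] N'_ge by blast
    then show "I \<subseteq> Idl (N' \<union> A)"
      using insert(7) genideal_minimal[OF genideal_ideal[OF N'_carr]] by simp
  qed
  moreover have "I \<subseteq> N' <+>\<^bsub>R\<^esub> I \<cdot> J"
    using insert(8) N'_ge(1) unfolding set_add_def' by blast
  moreover have "ideal N' R" unfolding N'_def using add_ideals[OF N(1) cgenideal_ideal[OF b]] .
  \<comment> \<open>By induction \<open>N + (b) = I\<close>, so \<open>b \<in> N + (N + (b)) J\<close> and \<open>b\<close> is absorbed into \<open>N\<close>.\<close>
  ultimately have "N' = I" using insert(3) \<open>N' \<subseteq> I\<close> insert(6) by blast
  then have "b \<in> N <+>\<^bsub>R\<^esub> (N <+>\<^bsub>R\<^esub> PIdl b) \<cdot> J"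
    using insert(8) N'_ge(2) unfolding N'_def by blast
  then have "b \<in> N" using nakayama_step[OF J N(1) b] by blast
  then have "N' \<subseteq> N"
    unfolding N'_Idl using genideal_minimal[OF N(1)] cgenideal_minimal[OF N(1)] by blast
  then show "N = I" using N'_ge(1) \<open>N' = I\<close> by blast
qed

lemma (in cring) nakayama:
  assumes J: "ideal J R" "\<And>u. u \<in> J \<Longrightarrow> \<one> \<ominus> u \<in> Units R"
    and N: "ideal N R" "N \<subseteq> Idl A"
    and A: "finite A" "A \<subseteq> carrier R"
    and "Idl A \<subseteq> N <+>\<^bsub>R\<^esub> (Idl A) \<cdot> J" \<comment> \<open>unparenthesised, \<open>Idl A \<cdot> J\<close> reads as \<open>Idl (A \<cdot> J)\<close>\<close>
  shows "N = Idl A"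
proof -
  have "A \<subseteq> Idl A" using genideal_self[OF A(2)] .
  moreover have "N \<union> A \<subseteq> carrier R"
    using N(2) A(2) ideal.Icarr[OF genideal_ideal[OF A(2)]] by blast
  ultimately have "Idl A = Idl (N \<union> A)"
    using N(2) genideal_minimal[OF genideal_ideal[OF A(2)], of "N \<union> A"]
      subset_Idl_subset[of "N \<union> A" A] by blast
  with \<open>A \<subseteq> Idl A\<close> show ?thesis
    using nakayama_modulo[OF J genideal_ideal[OF A(2)] A(1)] N assms(7) by blast
qed

lemma (in cring) exists_generator_modulo:
  assumes I: "ideal I R" and q: "ideal q R" and pid: "principal_domain (R Quot q)"
  shows "\<exists>x\<in>I. I \<subseteq> PIdl x <+>\<^bsub>R\<^esub> (I \<inter> q)"
proof -
  interpret Q: principal_domain "R Quot q" by fact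
  obtain c where c: "c \<in> carrier (R Quot q)" "(+>) q ` I = PIdl\<^bsub>R Quot q\<^esub> c"
    using Q.exists_gen[OF ring_ideal_imp_quot_ideal[OF q I]] by blast
  moreover have "c \<in> PIdl\<^bsub>R Quot q\<^esub> c" using Q.cgenideal_self[OF c(1)] .
  ultimately obtain x where x: "x \<in> I" "c = q +> x" by (metis imageE)
  have x_carr: "x \<in> carrier R" using ideal.Icarr[OF I x(1)] .
  have "a \<in> PIdl x <+>\<^bsub>R\<^esub> (I \<inter> q)" if a: "a \<in> I" for a
  proof -
    have a_carr: "a \<in> carrier R" using ideal.Icarr[OF I a] .
    obtain Y where Y: "Y \<in> carrier (R Quot q)" "q +> a = Y \<otimes>\<^bsub>R Quot q\<^esub> c"
      using a c(2) unfolding cgenideal_def by blast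
    then obtain r where r: "r \<in> carrier R" "Y = q +> r"
      unfolding FactRing_def A_RCOSETS_def' by auto
    have "q +> a = q +> (r \<otimes> x)"
      using Y(2) ideal.rcoset_mult_add[OF q r(1) x_carr] unfolding r(2) x(2) FactRing_def by simp
    then have "a \<ominus> r \<otimes> x \<in> q"
      using quotient_eq_iff_same_a_r_cos[OF q a_carr] r(1) x_carr by simp
    moreover have "a \<ominus> r \<otimes> x \<in> I"
      using a ideal.I_l_closed[OF I x(1) r(1)] I
      by (simp add: additive_subgroup.a_closed additive_subgroup.a_inv_closed ideal.axioms(1) minus_eq)
    moreover have "a = r \<otimes> x \<oplus> (a \<ominus> r \<otimes> x)"
      using a_carr r(1) x_carr by (simp add: minus_eq a_lcomm[of "r \<otimes> x" a] r_neg)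
    moreover have "r \<otimes> x \<in> PIdl x" unfolding cgenideal_def using r(1) by blast
    ultimately show ?thesis unfolding set_add_def' by blast
  qed
  then show ?thesis using x(1) by blast
qed

theorem lemma5p3:
  fixes R (structure)
  assumes "noetherian_ring R"
    and "local_ring R m"
    and "primeideal p R" and "primeideal q R"
    and "p <+>\<^bsub>R\<^esub> q = m"
    and "p \<inter> q = ideal_prod R p q"
    and "DVR (R Quot q)"
  shows "principalideal p R"
proof -
  interpret cring R using assms(2) local_ring_def by blast
  have p: "ideal p R" and q: "ideal q R" using assms(3,4) primeideal.axioms(1) by blast+
  have q_units: "\<one> \<ominus> u \<in> Units R" if "u \<in> q" for u
    using local_ring_one_minus_Units[OF assms(2)] set_add_ideal_upper(2)[OF p q] that assms(5)
    by blast
  obtain x where x: "x \<in> p" "p \<subseteq> PIdl x <+>\<^bsub>R\<^esub> p \<cdot> q"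
    using exists_generator_modulo[OF p q] assms(6,7) unfolding DVR_def by auto
  have x_carr: "x \<in> carrier R" using ideal.Icarr[OF p x(1)] .
  obtain A where A: "A \<subseteq> carrier R" "finite A" "p = Idl A"
    using noetherian_ring.finetely_gen[OF assms(1) p] by blast
  have "PIdl x = p"
    using nakayama[OF q q_units cgenideal_ideal[OF x_carr] _ A(2,1)]
      cgenideal_minimal[OF p x(1)] x(2) A(3) by simp
  then show ?thesis using cgenideal_is_principalideal[OF x_carr] by simp
qed

end
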